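(* Let agent $i\in[A]$ satisfy condition (M). Then for every initial condition $X(0)\in\mathbb{N}^A$, $$\prod_{j\ne i}\exp\Big\{-F_j(X_j(0))\sum_{k=X_i(0)}^{\infty}\frac{1}{F_i(k)}\Big\}\;\le\;\mathbb{P}(tMon_i)\;\le\;\prod_{j\ne i}\exp\Big\{-c\,F_j(X_j(0))\sum_{k=X_i(0)}^{\infty}\frac{1}{F_i(k)}\Big\},$$ where $$c:=\inf_{k\in\mathbb{N}_0}\frac{F_i(X_i(0)+k)}{F_i(X_i(0)+k)+\sum_{j\ne i}F_j(X_j(0))}>0 .$$
   Context: Fix $A\ge 2$, $[A]=\{1,\dots,A\}$, and feedback functions $F_i:\mathbb{N}=\{1,2,\dots\}\to(0,\infty)$, $i\in[A]$. The generalized Pólya urn is the Markov chain $X(n)=(X_1(n),\dots,X_A(n))$, $n\in\mathbb{N}_0$, on $\mathbb{N}^A$ with initial condition $X(0)$ (all $X_i(0)\ge1$) and transition probabilities $\mathbb{P}(X(n+1)=X(n)+e^{(i)}\mid X(n))=F_i(X_i(n))/\sum_{j=1}^AF_j(X_j(n))$, where $e^{(i)}$ is the $i$-th unit vector. Total monopoly of agent $i$ is the event $tMon_i=\{\forall n\ge0\ \forall j\ne i: X_j(n)=X_j(0)\}$. Agent $i$ satisfies condition (M) if $\sum_{k=1}^\infty 1/F_i(k)<\infty$. *)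

theory Defs
  imports "HOL-Probability.Probability"
begin

text \<open>Agents are the elements of a finite type 'ag (so [A] has CARD('ag) elements). A generalized Polya urn with feedback F and
initial condition x0 is any stochastic process X on a probability space M whose
finite-dimensional distributions are those of the Markov chain with transitions
x -> x + e_k with probability F k (x k) / (sum_j F j (x j)).\<close>

definition gpu_chain ::
  "'w measure \<Rightarrow> ('ag::finite \<Rightarrow> nat \<Rightarrow> real) \<Rightarrow> ('ag \<Rightarrow> nat) \<Rightarrow> (nat \<Rightarrow> 'w \<Rightarrow> ('ag \<Rightarrow> nat)) \<Rightarrow> bool"
  where
  "gpu_chain M F x0 X \<longleftrightarrow>
     prob_space M \<and>
     (\<forall>n. X n \<in> measurable M (count_space UNIV)) \<and>
     (AE \<omega> in M. X 0 \<omega> = x0) \<and>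
     (\<forall>n h k. measure M {\<omega> \<in> space M. (\<forall>m\<le>n. X m \<omega> = h m) \<and> X (Suc n) \<omega> = (h n)(k := h n k + 1)}
        = measure M {\<omega> \<in> space M. \<forall>m\<le>n. X m \<omega> = h m} * (F k (h n k) / (\<Sum>j\<in>UNIV. F j (h n j))))"

definition tMon :: "'w measure \<Rightarrow> (nat \<Rightarrow> 'w \<Rightarrow> ('ag \<Rightarrow> nat)) \<Rightarrow> 'ag \<Rightarrow> 'w set" where
  "tMon M X i = {\<omega> \<in> space M. \<forall>n. \<forall>j. j \<noteq> i \<longrightarrow> X n \<omega> j = X 0 \<omega> j}"

end

theory Submission
  imports Defs
begin

text \<open>Total monopoly of agent i means that every draw goes to i, so up to a null set it is the event
  that the urn follows the path x0 + m e_i. With a_m = F_i(x0_i + m) and S the sum of F_j(x0_j) over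
  j \<noteq> i, the transition law gives P(tMon_i) = \<Prod>_m a_m / (a_m + S). Both bounds then come from
  exp(-S/a) \<le> a/(a + S) \<le> exp(-cS/a), valid whenever c is below every factor, and c > 0 because
  condition (M) forces the factors to tend to 1.\<close>

lemma exp_neg_div_le_div_add:
  fixes a S :: real
  assumes "a > 0" "S \<ge> 0"
  shows "exp (- (S / a)) \<le> a / (a + S)"
proof -
  have "1 + S / a \<le> exp (S / a)" by (rule exp_ge_add_one_self)
  then have "1 / exp (S / a) \<le> 1 / (1 + S / a)"
    using assms by (intro divide_left_mono) (auto intro!: mult_pos_pos add_pos_nonneg)
  also have "1 / (1 + S / a) = a / (a + S)" using assms by (simp add: field_simps)
  finally show ?thesis by (simp add: exp_minus field_simps)
qed

lemma div_add_le_exp_neg: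
  fixes a S c :: real
  assumes "a > 0" "S \<ge> 0" "c \<le> a / (a + S)"
  shows "a / (a + S) \<le> exp (- (c * S / a))"
proof -
  have "a / (a + S) = 1 + - (S / (a + S))" using assms by (simp add: field_simps)
  also have "\<dots> \<le> exp (- (S / (a + S)))" by (rule exp_ge_add_one_self)
  also have "\<dots> \<le> exp (- (c * S / a))"
  proof -
    have "c * S / a \<le> a / (a + S) * S / a"
      using assms by (intro divide_right_mono mult_right_mono) auto
    also have "\<dots> = S / (a + S)" using assms by (simp add: divide_simps)
    finally show ?thesis by simp
  qed
  finally show ?thesis .
qed

lemma INF_pos_of_tendsto_pos:
  fixes p :: "nat \<Rightarrow> real"
  assumes pos: "\<And>k. p k > 0" and lim: "p \<longlonglongrightarrow> l" and "l > 0"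
  shows "(INF k. p k) > 0"
proof -
  obtain N where N: "\<And>k. k \<ge> N \<Longrightarrow> p k > l / 2"
    using order_tendstoD(1)[OF lim, of "l / 2"] \<open>l > 0\<close> by (auto simp: eventually_sequentially)
  define m where "m = Min (insert (l / 2) (p ` {..<N}))"
  have "m > 0" unfolding m_def using pos \<open>l > 0\<close> by (subst Min_gr_iff) auto
  moreover have "m \<le> p k" for k
  proof (cases "k < N")
    case True then show ?thesis unfolding m_def by (intro Min_le) auto
  next
    case False
    have "m \<le> l / 2" unfolding m_def by (intro Min_le) auto
    then show ?thesis using N[of k] False by auto
  qed
  then have "m \<le> (INF k. p k)" by (intro cINF_greatest) auto
  ultimately show ?thesis by linarith
qed

lemma INF_div_add_pos:
  fixes a :: "nat \<Rightarrow> real"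
  assumes pos: "\<And>k. a k > 0" and "S \<ge> 0" and sum: "summable (\<lambda>k. 1 / a k)"
  shows "(INF k. a k / (a k + S)) > 0"
proof (rule INF_pos_of_tendsto_pos[where l = 1])
  show "a k / (a k + S) > 0" for k
    using pos[of k] \<open>S \<ge> 0\<close> by (simp add: add_pos_nonneg)
  have "(\<lambda>k. 1 / (1 + S * (1 / a k))) \<longlonglongrightarrow> 1 / (1 + S * 0)"
    using summable_LIMSEQ_zero[OF sum] by (intro tendsto_intros) auto
  moreover have "1 / (1 + S * (1 / a k)) = a k / (a k + S)" for k
    using pos[of k] by (simp add: field_simps)
  ultimately show "(\<lambda>k. a k / (a k + S)) \<longlonglongrightarrow> 1" by simp
qed simp

lemma prod_div_add_tendsto_ge:
  fixes a :: "nat \<Rightarrow> real"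
  assumes pos: "\<And>k. a k > 0" and "S \<ge> 0" and sum: "summable (\<lambda>k. 1 / a k)"
    and lim: "(\<lambda>n. \<Prod>k<n. a k / (a k + S)) \<longlonglongrightarrow> L"
  shows "exp (- S * (\<Sum>k. 1 / a k)) \<le> L"
proof (rule LIMSEQ_le_const[OF lim], intro exI allI impI)
  fix n
  have "exp (- S * (\<Sum>k. 1 / a k)) \<le> exp (- S * (\<Sum>k<n. 1 / a k))"
    using sum_le_suminf[OF sum, of "{..<n}"] pos \<open>S \<ge> 0\<close>
    by (simp add: less_imp_le mult_left_mono)
  also have "\<dots> = (\<Prod>k<n. exp (- (S / a k)))"
    by (simp add: exp_sum[symmetric] sum_distrib_left sum_negf)
  also have "\<dots> \<le> (\<Prod>k<n. a k / (a k + S))"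
    using pos \<open>S \<ge> 0\<close> by (intro prod_mono) (simp add: exp_neg_div_le_div_add)
  finally show "exp (- S * (\<Sum>k. 1 / a k)) \<le> (\<Prod>k<n. a k / (a k + S))" .
qed

lemma prod_div_add_tendsto_le:
  fixes a :: "nat \<Rightarrow> real"
  assumes pos: "\<And>k. a k > 0" and "S \<ge> 0" and sum: "summable (\<lambda>k. 1 / a k)"
    and lim: "(\<lambda>n. \<Prod>k<n. a k / (a k + S)) \<longlonglongrightarrow> L"
    and c: "\<And>k. c \<le> a k / (a k + S)"
  shows "L \<le> exp (- c * S * (\<Sum>k. 1 / a k))"
proof (rule LIMSEQ_le[OF lim])
  show "(\<lambda>n. exp (- c * S * (\<Sum>k<n. 1 / a k))) \<longlonglongrightarrow> exp (- c * S * (\<Sum>k. 1 / a k))"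
    using summable_LIMSEQ[OF sum] by (intro tendsto_intros)
  show "\<exists>N. \<forall>n\<ge>N. (\<Prod>k<n. a k / (a k + S)) \<le> exp (- c * S * (\<Sum>k<n. 1 / a k))"
  proof (intro exI allI impI)
    fix n
    have "(\<Prod>k<n. a k / (a k + S)) \<le> (\<Prod>k<n. exp (- (c * S / a k)))"
      using pos \<open>S \<ge> 0\<close> c
      by (intro prod_mono conjI divide_nonneg_nonneg div_add_le_exp_neg) (auto intro: less_imp_le add_nonneg_nonneg)
    also have "\<dots> = exp (- c * S * (\<Sum>k<n. 1 / a k))"
      by (simp add: exp_sum[symmetric] sum_distrib_left sum_negf)
    finally show "(\<Prod>k<n. a k / (a k + S)) \<le> exp (- c * S * (\<Sum>k<n. 1 / a k))" .
  qed
qed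

lemma sets_tMon:
  fixes X :: "nat \<Rightarrow> 'w \<Rightarrow> 'ag::finite \<Rightarrow> nat"
  assumes X: "\<And>n. X n \<in> M \<rightarrow>\<^sub>M count_space UNIV"
  shows "tMon M X i \<in> sets M"
proof -
  have coord: "{\<omega> \<in> space M. X n \<omega> j = v} \<in> sets M" for n j v
  proof -
    have "{\<omega> \<in> space M. X n \<omega> j = v} = X n -` {x. x j = v} \<inter> space M" by auto
    also have "\<dots> \<in> sets M" by (rule measurable_sets[OF X]) simp
    finally show ?thesis .
  qed
  have diag: "{\<omega> \<in> space M. j \<noteq> i \<longrightarrow> X n \<omega> j = X 0 \<omega> j} \<in> sets M" for n j
  proof (cases "j = i")
    case False
    then have "{\<omega> \<in> space M. j \<noteq> i \<longrightarrow> X n \<omega> j = X 0 \<omega> j}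
        = (\<Union>v. {\<omega> \<in> space M. X n \<omega> j = v} \<inter> {\<omega> \<in> space M. X 0 \<omega> j = v})"
      by auto
    also have "\<dots> \<in> sets M" using coord by (intro sets.countable_UN' sets.Int) auto
    finally show ?thesis .
  qed simp
  have "tMon M X i = space M \<inter> (\<Inter>n. \<Inter>j. {\<omega> \<in> space M. j \<noteq> i \<longrightarrow> X n \<omega> j = X 0 \<omega> j})"
    unfolding tMon_def by blast
  also have "\<dots> \<in> sets M"
    using diag by (intro sets.Int sets.countable_INT' sets.finite_INT) auto
  finally show ?thesis .
qed

text \<open>Unfolding \<open>tMon_def\<close> inside the simplifier loops (the equation \<open>X n \<omega> j = X 0 \<omega> j\<close> also
  rewrites \<open>X 0 \<omega> j\<close> to itself), so membership is used through these rules.\<close>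

lemma tMonD:
  assumes "\<omega> \<in> tMon M X i"
  shows "\<omega> \<in> space M" and "j \<noteq> i \<Longrightarrow> X n \<omega> j = X 0 \<omega> j"
  using assms unfolding tMon_def by blast+

locale polya_urn =
  fixes M :: "'w measure" and F :: "'ag::finite \<Rightarrow> nat \<Rightarrow> real" and x0 :: "'ag \<Rightarrow> nat"
    and X :: "nat \<Rightarrow> 'w \<Rightarrow> ('ag \<Rightarrow> nat)"
  assumes chain: "gpu_chain M F x0 X"
begin

sublocale prob_space M
  using chain unfolding gpu_chain_def by blast

lemma measurable_X [measurable]: "X n \<in> M \<rightarrow>\<^sub>M count_space UNIV"
  using chain unfolding gpu_chain_def by blast

lemma AE_X_0: "AE \<omega> in M. X 0 \<omega> = x0"
  using chain unfolding gpu_chain_def by blast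

definition path_event :: "(nat \<Rightarrow> 'ag \<Rightarrow> nat) \<Rightarrow> nat \<Rightarrow> 'w set" where
  "path_event h n = {\<omega> \<in> space M. \<forall>m\<le>n. X m \<omega> = h m}"

lemma sets_path_event [measurable]: "path_event h n \<in> sets M"
  unfolding path_event_def by measurable

lemma measure_path_event_step:
  "measure M {\<omega> \<in> path_event h n. X (Suc n) \<omega> = (h n)(k := h n k + 1)}
     = measure M (path_event h n) * (F k (h n k) / (\<Sum>j\<in>UNIV. F j (h n j)))"
proof -
  have "measure M {\<omega> \<in> path_event h n. X (Suc n) \<omega> = (h n)(k := h n k + 1)}
      = measure M {\<omega> \<in> space M. (\<forall>m\<le>n. X m \<omega> = h m) \<and> X (Suc n) \<omega> = (h n)(k := h n k + 1)}"
    by (rule arg_cong[where f = "measure M"]) (auto simp: path_event_def)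
  also have "\<dots> = measure M {\<omega> \<in> space M. \<forall>m\<le>n. X m \<omega> = h m} * (F k (h n k) / (\<Sum>j\<in>UNIV. F j (h n j)))"
    using chain unfolding gpu_chain_def by blast
  also have "{\<omega> \<in> space M. \<forall>m\<le>n. X m \<omega> = h m} = path_event h n"
    unfolding path_event_def ..
  finally show ?thesis .
qed

lemma measure_path_event:
  assumes "h 0 = x0" and "\<And>m. h (Suc m) = (h m)(k m := h m (k m) + 1)"
  shows "measure M (path_event h n) = (\<Prod>m<n. F (k m) (h m (k m)) / (\<Sum>j\<in>UNIV. F j (h m j)))"
proof (induction n)
  case 0
  have "path_event h 0 = {\<omega> \<in> space M. X 0 \<omega> = x0}"
    unfolding path_event_def using assms(1) by auto
  then show ?case using AE_X_0 prob_Collect_eq_1[of "\<lambda>\<omega>. X 0 \<omega> = x0"] by simp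
next
  case (Suc n)
  have "path_event h (Suc n) = {\<omega> \<in> path_event h n. X (Suc n) \<omega> = (h n)(k n := h n (k n) + 1)}"
    unfolding path_event_def using assms(2)[of n] by (auto simp: le_Suc_eq)
  then show ?case using Suc measure_path_event_step[of h n "k n"] by simp
qed

text \<open>The events of the possible next steps partition the path event up to a null set, since
  their transition probabilities add up to one.\<close>

lemma AE_path_event_increment:
  assumes "(\<Sum>j\<in>UNIV. F j (h n j)) \<noteq> 0"
  shows "AE \<omega> in M. \<omega> \<in> path_event h n \<longrightarrow> (\<exists>k. X (Suc n) \<omega> = (h n)(k := h n k + 1))"
proof -
  define E where "E k = {\<omega> \<in> path_event h n. X (Suc n) \<omega> = (h n)(k := h n k + 1)}" for k
  have sets_E: "E k \<in> sets M" for k unfolding E_def by measurable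
  have "disjoint_family E"
    unfolding disjoint_family_on_def
  proof (intro ballI impI)
    fix k k' :: 'ag assume "k \<noteq> k'"
    then have "(h n)(k := h n k + 1) \<noteq> (h n)(k' := h n k' + 1)"
      by (metis fun_upd_apply n_not_Suc_n Suc_eq_plus1)
    then show "E k \<inter> E k' = {}" unfolding E_def by auto
  qed
  then have "measure M (\<Union>k. E k) = (\<Sum>k\<in>UNIV. measure M (E k))"
    using sets_E by (intro finite_measure_finite_Union) auto
  also have "\<dots> = (\<Sum>k\<in>UNIV. measure M (path_event h n) * (F k (h n k) / (\<Sum>j\<in>UNIV. F j (h n j))))"
    unfolding E_def measure_path_event_step ..
  also have "\<dots> = measure M (path_event h n)"
    using assms by (simp add: sum_distrib_left[symmetric] sum_divide_distrib[symmetric])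
  finally have "measure M (path_event h n - (\<Union>k. E k)) = 0"
    using sets_E by (subst finite_measure_Diff) (auto simp: E_def)
  then have "path_event h n - (\<Union>k. E k) \<in> null_sets M"
    using sets_E by (simp add: emeasure_eq_measure null_sets_def)
  from AE_not_in[OF this] show ?thesis by eventually_elim (auto simp: E_def)
qed

definition monopoly_path :: "'ag \<Rightarrow> nat \<Rightarrow> 'ag \<Rightarrow> nat" where
  "monopoly_path i m = x0(i := x0 i + m)"

lemma AE_tMon_iff_monopoly_path:
  assumes "\<And>m. (\<Sum>j\<in>UNIV. F j (monopoly_path i m j)) \<noteq> 0"
  shows "AE \<omega> in M. \<omega> \<in> tMon M X i \<longleftrightarrow> \<omega> \<in> (\<Inter>n. path_event (monopoly_path i) n)"
proof -
  let ?h = "monopoly_path i"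
  have "AE \<omega> in M. \<omega> \<in> tMon M X i \<longrightarrow> \<omega> \<in> path_event ?h n" for n
  proof (induction n)
    case 0
    show ?case using AE_X_0
      by eventually_elim (auto simp: path_event_def monopoly_path_def dest: tMonD(1))
  next
    case (Suc n)
    with AE_path_event_increment[of ?h n, OF assms]
    show ?case
    proof eventually_elim
      case (elim \<omega>)
      show ?case
      proof
        assume tMon: "\<omega> \<in> tMon M X i"
        with elim obtain k where k: "X (Suc n) \<omega> = (?h n)(k := ?h n k + 1)" by blast
        have "k = i"
        proof (rule ccontr)
          assume "k \<noteq> i"
          have "X (Suc n) \<omega> k = X 0 \<omega> k" using tMonD(2)[OF tMon \<open>k \<noteq> i\<close>] .
          moreover have "X 0 \<omega> k = ?h 0 k" using elim tMon by (auto simp: path_event_def)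
          ultimately show False using k \<open>k \<noteq> i\<close> by (simp add: monopoly_path_def)
        qed
        with k have "X (Suc n) \<omega> = ?h (Suc n)" by (simp add: monopoly_path_def fun_eq_iff)
        with tMon elim show "\<omega> \<in> path_event ?h (Suc n)"
          by (auto simp: path_event_def le_Suc_eq)
      qed
    qed
  qed
  then have "AE \<omega> in M. \<forall>n. \<omega> \<in> tMon M X i \<longrightarrow> \<omega> \<in> path_event ?h n"
    by (intro AE_all_countable[THEN iffD2] allI)
  then show ?thesis
  proof eventually_elim
    case (elim \<omega>)
    have "\<omega> \<in> tMon M X i" if "\<omega> \<in> (\<Inter>n. path_event ?h n)"
    proof -
      from that have "\<omega> \<in> space M" and "X n \<omega> = ?h n" for n by (auto simp: path_event_def)
      then show ?thesis unfolding tMon_def by (simp add: monopoly_path_def)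
    qed
    with elim show ?case by blast
  qed
qed

lemma sum_F_monopoly_path:
  "(\<Sum>j\<in>UNIV. F j (monopoly_path i m j)) = F i (x0 i + m) + (\<Sum>j\<in>UNIV - {i}. F j (x0 j))"
proof -
  have "(\<Sum>j\<in>UNIV. F j (monopoly_path i m j))
      = F i (monopoly_path i m i) + (\<Sum>j\<in>UNIV - {i}. F j (monopoly_path i m j))"
    by (rule sum.remove) auto
  also have "(\<Sum>j\<in>UNIV - {i}. F j (monopoly_path i m j)) = (\<Sum>j\<in>UNIV - {i}. F j (x0 j))"
    by (rule sum.cong) (auto simp: monopoly_path_def)
  finally show ?thesis by (simp add: monopoly_path_def)
qed

lemma prod_tendsto_measure_tMon:
  assumes F_pos: "\<And>j k. k \<ge> 1 \<Longrightarrow> F j k > 0" and x0_pos: "\<And>j. x0 j \<ge> 1"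
  shows "(\<lambda>n. \<Prod>k<n. F i (x0 i + k) / (F i (x0 i + k) + (\<Sum>j\<in>UNIV - {i}. F j (x0 j))))
           \<longlonglongrightarrow> measure M (tMon M X i)"
proof -
  let ?h = "monopoly_path i"
  have "F j (?h m j) > 0" for j m
    unfolding monopoly_path_def using x0_pos[of j] x0_pos[of i] by (intro F_pos) auto
  then have "(\<Sum>j\<in>UNIV. F j (?h m j)) > 0" for m by (intro sum_pos) auto
  then have "measure M (tMon M X i) = measure M (\<Inter>n. path_event ?h n)"
    by (intro measure_eq_AE AE_tMon_iff_monopoly_path sets_tMon measurable_X) (auto simp: less_imp_neq[symmetric])
  moreover have "(\<lambda>n. measure M (path_event ?h n)) \<longlonglongrightarrow> measure M (\<Inter>n. path_event ?h n)"
    by (intro finite_Lim_measure_decseq decseq_SucI) (auto simp: path_event_def)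
  moreover have "measure M (path_event ?h n)
      = (\<Prod>k<n. F i (x0 i + k) / (F i (x0 i + k) + (\<Sum>j\<in>UNIV - {i}. F j (x0 j))))" for n
    using measure_path_event[of ?h "\<lambda>_. i"]
    by (simp add: sum_F_monopoly_path) (simp add: monopoly_path_def fun_eq_iff)
  ultimately show ?thesis by simp
qed

end

theorem mainTheorem1:
  fixes F :: "'ag::finite \<Rightarrow> nat \<Rightarrow> real"
    and x0 :: "'ag \<Rightarrow> nat"
    and M :: "'w measure"
    and X :: "nat \<Rightarrow> 'w \<Rightarrow> ('ag \<Rightarrow> nat)"
    and i :: 'ag
  assumes "CARD('ag) \<ge> 2"
    and "\<forall>j k. k \<ge> 1 \<longrightarrow> F j k > 0"
    and "\<forall>j. x0 j \<ge> 1"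
    and "summable (\<lambda>k. 1 / F i (Suc k))"
    and "gpu_chain M F x0 X"
  shows "let T = (\<Sum>k. 1 / F i (x0 i + k));
             c = (INF k. F i (x0 i + k) / (F i (x0 i + k) + (\<Sum>j\<in>UNIV - {i}. F j (x0 j))))
         in c > 0 \<and>
            (\<Prod>j\<in>UNIV - {i}. exp (- F j (x0 j) * T)) \<le> measure M (tMon M X i) \<and>
            measure M (tMon M X i) \<le> (\<Prod>j\<in>UNIV - {i}. exp (- c * F j (x0 j) * T))"
proof -
  interpret polya_urn M F x0 X by unfold_locales (fact assms(5))
  define a where "a k = F i (x0 i + k)" for k
  define S where "S = (\<Sum>j\<in>UNIV - {i}. F j (x0 j))"
  define T where "T = (\<Sum>k. 1 / a k)"
  define c where "c = (INF k. a k / (a k + S))"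
  have a_pos: "a k > 0" for k
    unfolding a_def using assms(2,3) by (simp add: add_increasing2)
  have "S \<ge> 0"
    unfolding S_def using assms(2,3) by (intro sum_nonneg) (simp add: less_imp_le)
  have summable: "summable (\<lambda>k. 1 / a k)"
    unfolding a_def using assms(4) summable_Suc_iff[of "\<lambda>k. 1 / F i k"]
      summable_iff_shift[of "\<lambda>k. 1 / F i k" "x0 i"]
    by (simp add: add.commute)
  have lim: "(\<lambda>n. \<Prod>k<n. a k / (a k + S)) \<longlonglongrightarrow> measure M (tMon M X i)"
    unfolding a_def S_def using assms(2,3) by (intro prod_tendsto_measure_tMon) auto
  have "c > 0"
    unfolding c_def using a_pos \<open>S \<ge> 0\<close> summable by (rule INF_div_add_pos)
  have c_le: "c \<le> a k / (a k + S)" for k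
    unfolding c_def using a_pos \<open>S \<ge> 0\<close>
    by (intro cINF_lower bdd_belowI[of _ 0]) (auto intro!: less_imp_le divide_pos_pos add_pos_nonneg)
  have "measure M (tMon M X i) \<le> exp (- c * S * T)"
    unfolding T_def using a_pos \<open>S \<ge> 0\<close> summable lim c_le by (rule prod_div_add_tendsto_le)
  moreover have "exp (- S * T) \<le> measure M (tMon M X i)"
    unfolding T_def using a_pos \<open>S \<ge> 0\<close> summable lim by (rule prod_div_add_tendsto_ge)
  moreover have "(\<Prod>j\<in>UNIV - {i}. exp (- r * F j (x0 j) * T)) = exp (- r * S * T)" for r
    unfolding S_def by (simp add: exp_sum[symmetric] sum_distrib_left sum_distrib_right sum_negf)
  moreover from this[of 1] have "(\<Prod>j\<in>UNIV - {i}. exp (- F j (x0 j) * T)) = exp (- S * T)"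
    by simp
  moreover have "(\<Sum>k. 1 / F i (x0 i + k)) = T" unfolding T_def a_def ..
  moreover have "(INF k. F i (x0 i + k) / (F i (x0 i + k) + (\<Sum>j\<in>UNIV - {i}. F j (x0 j)))) = c"
    unfolding c_def a_def S_def ..
  ultimately show ?thesis
    using \<open>c > 0\<close> unfolding Let_def by simp
qed

end
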